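(* Let $$B= \begin{pmatrix} 1& 2& 2\\ 2&1& 2\\ 2&2& 3 \end{pmatrix}.$$ For every positive integer $n$, writing $B^n(3,4,5)^\top=(x,y,z)^\top$, the circumradius of the triangle with side lengths $x,y,z$ is $$R_n=\frac{(5\sqrt{2}-7)(3-2\sqrt{2})^n+(5\sqrt{2}+7)(3+2\sqrt{2})^n}{4\sqrt{2}}.$$
   Context: Triples are regarded as row vectors and $\top$ denotes transpose. The triple $B^n(3,4,5)^\top$ is a primitive Pythagorean triple (positive integers with $x^2+y^2=z^2$), so the triangle is a right triangle with hypotenuse $z$. *)

theory Defs
  imports "HOL-Analysis.Analysis"
begin

definition Bmat :: "real^3^3" where
  "Bmat = vector [vector [1,2,2], vector [2,1,2], vector [2,2,3]]"

primrec matrix_pow :: "real^'n^'n \<Rightarrow> nat \<Rightarrow> real^'n^'n" where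
  "matrix_pow A 0 = mat 1"
| "matrix_pow A (Suc n) = A ** matrix_pow A n"

text \<open>Circumradius of a (nondegenerate) triangle with side lengths a, b, c:
  R = abc / (4 * Area), with Area given by Heron's formula.\<close>
definition circumradius :: "real \<Rightarrow> real \<Rightarrow> real \<Rightarrow> real" where
  "circumradius a b c =
     a * b * c / (4 * sqrt (((a+b+c)/2) * ((b+c-a)/2) * ((a+c-b)/2) * ((a+b-c)/2)))"

end

theory Submission
  imports Defs
begin

text \<open>The map \<open>v \<mapsto> B v\<close> preserves positivity and the form \<open>x\<^sup>2 + y\<^sup>2 - z\<^sup>2\<close>, so every
  \<open>B\<^sup>n (3,4,5)\<^sup>\<top>\<close> is a right triangle with hypotenuse \<open>z\<close> and circumradius \<open>z/2\<close>.
  On the pair \<open>(x + y, z)\<close> the map acts as \<open>[[3,4],[2,3]]\<close>, whose eigenvectors give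
  \<open>(x + y) \<plusminus> \<surd>2 z\<close> as eigen-combinations with eigenvalues \<open>3 \<plusminus> 2\<surd>2\<close>;
  subtracting them yields the closed form for \<open>z\<close>.\<close>

lemma matrix_pow_mult_vec_invariant:
  assumes "\<And>w. P w \<Longrightarrow> P (A *v w)" and "P v"
  shows "P (matrix_pow A n *v v)"
  by (induction n) (simp_all add: matrix_vector_mul_assoc[symmetric] assms)

lemma matrix_pow_mult_vec_eigen:
  fixes c :: "'b::monoid_mult"
  assumes "\<And>w. f (A *v w) = c * f w"
  shows "f (matrix_pow A n *v v) = c ^ n * f v"
  by (induction n) (simp_all add: matrix_vector_mul_assoc[symmetric] assms mult.assoc)

lemma Bmat_mult_vec_nth:
  "(Bmat *v v) $ 1 = v$1 + 2 * v$2 + 2 * v$3"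
  "(Bmat *v v) $ 2 = 2 * v$1 + v$2 + 2 * v$3"
  "(Bmat *v v) $ 3 = 2 * v$1 + 2 * v$2 + 3 * v$3"
  unfolding Bmat_def by (simp_all add: matrix_vector_mult_def sum_3 vector_3)

lemma Bmat_preserves_pythagorean_form:
  "((Bmat *v v)$1)\<^sup>2 + ((Bmat *v v)$2)\<^sup>2 - ((Bmat *v v)$3)\<^sup>2 = (v$1)\<^sup>2 + (v$2)\<^sup>2 - (v$3)\<^sup>2"
  by (simp add: Bmat_mult_vec_nth power2_eq_square algebra_simps)

lemma Bmat_preserves_right_triangles:
  assumes "v$1 > 0 \<and> v$2 > 0 \<and> v$3 > 0 \<and> (v$1)\<^sup>2 + (v$2)\<^sup>2 = (v$3)\<^sup>2"
  shows "(Bmat *v v)$1 > 0 \<and> (Bmat *v v)$2 > 0 \<and> (Bmat *v v)$3 > 0 \<and>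
    ((Bmat *v v)$1)\<^sup>2 + ((Bmat *v v)$2)\<^sup>2 = ((Bmat *v v)$3)\<^sup>2"
  using assms Bmat_preserves_pythagorean_form[of v] by (simp add: Bmat_mult_vec_nth)

lemma Bmat_eigen_combination:
  assumes "r\<^sup>2 = 2"
  shows "((Bmat *v v)$1 + (Bmat *v v)$2) + r * (Bmat *v v)$3 = (3 + 2 * r) * ((v$1 + v$2) + r * v$3)"
proof -
  have "r * (2 * v$1 + 2 * v$2 + 3 * v$3) = 2 * r * (v$1 + v$2) + 3 * r * v$3"
    by (simp add: algebra_simps)
  moreover have "4 * v$3 = 2 * r * (r * v$3)"
    using assms by (simp add: power2_eq_square)
  ultimately show ?thesis
    by (simp add: Bmat_mult_vec_nth algebra_simps)
qed

lemma circumradius_right_triangle: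
  fixes x y z :: real
  assumes "x > 0" "y > 0" "x\<^sup>2 + y\<^sup>2 = z\<^sup>2"
  shows "circumradius x y z = z / 2"
proof -
  have "((x+y+z)/2) * ((y+z-x)/2) * ((x+z-y)/2) * ((x+y-z)/2) = ((x+y)\<^sup>2 - z\<^sup>2) * (z\<^sup>2 - (x-y)\<^sup>2) / 16"
    by (simp add: field_simps power2_eq_square)
  also have "\<dots> = ((x+y)\<^sup>2 - (x\<^sup>2 + y\<^sup>2)) * ((x\<^sup>2 + y\<^sup>2) - (x-y)\<^sup>2) / 16"
    by (simp only: assms(3))
  also have "\<dots> = (x * y / 2)\<^sup>2"
    by (simp add: field_simps power2_eq_square)
  finally have "sqrt (((x+y+z)/2) * ((y+z-x)/2) * ((x+z-y)/2) * ((x+y-z)/2)) = x * y / 2"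
    using assms(1,2) by simp
  then show ?thesis
    unfolding circumradius_def using assms(1,2) by (simp add: field_simps)
qed

theorem mainTheorem8:
  fixes n :: nat
  assumes "n \<ge> 1"
  shows "let v = matrix_pow Bmat n *v vector [3, 4, 5]
         in circumradius (v $ 1) (v $ 2) (v $ 3) =
            ((5 * sqrt 2 - 7) * (3 - 2 * sqrt 2) ^ n + (5 * sqrt 2 + 7) * (3 + 2 * sqrt 2) ^ n)
              / (4 * sqrt 2)"
proof -
  define v where "v = matrix_pow Bmat n *v vector [3, 4, 5]"
  have "v$1 > 0 \<and> v$2 > 0 \<and> v$3 > 0 \<and> (v$1)\<^sup>2 + (v$2)\<^sup>2 = (v$3)\<^sup>2"
    unfolding v_def
    by (rule matrix_pow_mult_vec_invariant, rule Bmat_preserves_right_triangles) (simp_all add: vector_3)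
  then have radius: "circumradius (v$1) (v$2) (v$3) = v$3 / 2"
    using circumradius_right_triangle by blast
  have eigen: "(v$1 + v$2) + r * v$3 = (3 + 2 * r) ^ n * (7 + r * 5)" if "r\<^sup>2 = 2" for r
    unfolding v_def
    using matrix_pow_mult_vec_eigen[where f = "\<lambda>w. (w$1 + w$2) + r * w$3",
        OF Bmat_eigen_combination[OF that]]
    by (simp add: vector_3)
  have "2 * sqrt 2 * v$3 = (3 + 2 * sqrt 2) ^ n * (7 + sqrt 2 * 5) - (3 - 2 * sqrt 2) ^ n * (7 - sqrt 2 * 5)"
    using eigen[of "sqrt 2"] eigen[of "- sqrt 2"] by simp
  then show ?thesis
    unfolding v_def[symmetric] Let_def radius by (simp add: field_simps)
qed

end
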